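(* Let $M$ be a finite matroid, $k\ge0$, let $e_1,\dots,e_k$ be distinct elements of $M$ and $C_0,C_1,\dots,C_k$ subsets of $M$ such that $|C_i|\ge3$ for $i=0,\dots,k$, $C_{i-1}\cap C_i=\{e_i\}$ for $i=1,\dots,k$, and $C_i\cap C_j=\emptyset$ whenever $|i-j|\ge2$. Let $e_0\in C_0\setminus\{e_1\}$ and, for $i=1,\dots,k$, let $e_i'\in C_{i-1}\setminus\{e_{i-1},e_i\}$. Define $M_0=M$ and $M_i=M_{i-1}/(C_{i-1}\setminus\{e_i,e_i'\})$ for $i=1,\dots,k$, and suppose $C_i$ is a circuit in $M_i$ for every $i=0,\dots,k$. Then $M$ contains a circuit of length at least $\sqrt{\sum_{i=0}^k|C_i|}$.
   Context: For a finite matroid $M$ with rank function $r_M$ and $F\subseteq M$, the contraction $M/F$ has ground set $M\setminus F$, and $F'\subseteq M\setminus F$ is independent in $M/F$ iff $F'$ is independent in $M$ and $r_M(F\cup F')=r_M(F)+r_M(F')$. A circuit is a minimal dependent set; its length is its number of elements. *)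

theory Defs
  imports Complex_Main
begin

type_synonym 'a matroid = "'a set \<times> ('a set \<Rightarrow> bool)"

definition ground :: "'a matroid \<Rightarrow> 'a set" where
  "ground M = fst M"

definition indep :: "'a matroid \<Rightarrow> 'a set \<Rightarrow> bool" where
  "indep M X = snd M X"

definition finite_matroid :: "'a matroid \<Rightarrow> bool" where
  "finite_matroid M \<longleftrightarrow>
     finite (ground M)
   \<and> (\<forall>X. indep M X \<longrightarrow> X \<subseteq> ground M)
   \<and> indep M {}
   \<and> (\<forall>X Y. indep M Y \<and> X \<subseteq> Y \<longrightarrow> indep M X)
   \<and> (\<forall>X Y. indep M X \<and> indep M Y \<and> card X < card Y \<longrightarrow>
        (\<exists>y\<in>Y - X. indep M (insert y X)))"

definition rank :: "'a matroid \<Rightarrow> 'a set \<Rightarrow> nat" where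
  "rank M X = Max {card I | I. I \<subseteq> X \<and> indep M I}"

definition contract :: "'a matroid \<Rightarrow> 'a set \<Rightarrow> 'a matroid" where
  "contract M F = (ground M - F,
     (\<lambda>F'. F' \<subseteq> ground M - F \<and> indep M F' \<and> rank M (F \<union> F') = rank M F + rank M F'))"

definition circuit :: "'a matroid \<Rightarrow> 'a set \<Rightarrow> bool" where
  "circuit M C \<longleftrightarrow> C \<subseteq> ground M \<and> \<not> indep M C \<and> (\<forall>D. D \<subset> C \<longrightarrow> indep M D)"

primrec contr_seq :: "'a matroid \<Rightarrow> (nat \<Rightarrow> 'a set) \<Rightarrow> (nat \<Rightarrow> 'a) \<Rightarrow> (nat \<Rightarrow> 'a) \<Rightarrow> nat \<Rightarrow> 'a matroid" where
  "contr_seq M C e e' 0 = M"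
| "contr_seq M C e e' (Suc i) = contract (contr_seq M C e e' i) (C i - {e (Suc i), e' (Suc i)})"

end

theory Submission
  imports Defs
begin

text \<open>Contracting \<open>C\<^sub>0\<close> minus two of its elements
  \<open>e\<^sub>1, e\<^sub>1'\<close> turns them into a parallel pair, so a circuit of the contraction through \<open>e\<^sub>1\<close>
  can be swapped to one through \<open>e\<^sub>1'\<close>; strong circuit elimination against \<open>C\<^sub>0\<close> then lifts it
  to a circuit of \<open>M\<close> through \<open>e\<^sub>0\<close> with one more element. By induction \<open>M\<close> has a circuit
  of length at least \<open>k + 2\<close>, and lifting each \<open>C\<^sub>i\<close> back to \<open>M\<close> gives circuits at least as
  long as every \<open>C\<^sub>i\<close>. A longest circuit \<open>D\<close> therefore satisfies
  \<open>\<Sum>\<^sub>i |C\<^sub>i| \<le> (k + 1) max\<^sub>i |C\<^sub>i| \<le> |D|\<^sup>2\<close>.\<close>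

lemma finite_matroidD:
  assumes "finite_matroid M"
  shows "finite (ground M)"
    and "indep M X \<Longrightarrow> X \<subseteq> ground M"
    and "indep M {}"
    and "indep M Y \<Longrightarrow> X \<subseteq> Y \<Longrightarrow> indep M X"
    and "indep M X \<Longrightarrow> indep M Y \<Longrightarrow> card X < card Y \<Longrightarrow> \<exists>y\<in>Y - X. indep M (insert y X)"
proof -
  have "\<forall>X Y. indep M Y \<and> X \<subseteq> Y \<longrightarrow> indep M X"
    and "\<forall>X Y. indep M X \<and> indep M Y \<and> card X < card Y \<longrightarrow> (\<exists>y\<in>Y - X. indep M (insert y X))"
    using assms unfolding finite_matroid_def by simp_all
  then show "indep M Y \<Longrightarrow> X \<subseteq> Y \<Longrightarrow> indep M X"
    and "indep M X \<Longrightarrow> indep M Y \<Longrightarrow> card X < card Y \<Longrightarrow> \<exists>y\<in>Y - X. indep M (insert y X)"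
    by blast+
  show "finite (ground M)" "indep M X \<Longrightarrow> X \<subseteq> ground M" "indep M {}"
    using assms unfolding finite_matroid_def by simp_all
qed

lemma indep_finite: "finite_matroid M \<Longrightarrow> indep M X \<Longrightarrow> finite X"
  using finite_matroidD(1,2) finite_subset by metis

subsection \<open>Rank\<close>

lemma finite_indep_cards:
  assumes "finite_matroid M"
  shows "finite {card I | I. I \<subseteq> X \<and> indep M I}"
proof -
  have "{card I | I. I \<subseteq> X \<and> indep M I} \<subseteq> {..card (ground M)}"
    using finite_matroidD(1,2)[OF assms] card_mono by fastforce
  then show ?thesis
    using finite_subset by blast
qed

lemma rank_attained:
  assumes "finite_matroid M"
  obtains I where "I \<subseteq> X" "indep M I" "card I = rank M X"
proof -
  have "{card I | I. I \<subseteq> X \<and> indep M I} \<noteq> {}"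
    using finite_matroidD(3)[OF assms] by blast
  then have "rank M X \<in> {card I | I. I \<subseteq> X \<and> indep M I}"
    unfolding rank_def by (rule Max_in[OF finite_indep_cards[OF assms]])
  then show ?thesis
    using that by auto
qed

lemma card_le_rank:
  assumes "finite_matroid M" "indep M I" "I \<subseteq> X"
  shows "card I \<le> rank M X"
  unfolding rank_def using assms by (intro Max_ge[OF finite_indep_cards]) auto

lemma rank_mono:
  assumes "finite_matroid M" "X \<subseteq> Y"
  shows "rank M X \<le> rank M Y"
proof -
  obtain I where "I \<subseteq> X" "indep M I" "card I = rank M X"
    using rank_attained[OF assms(1)] .
  then show ?thesis
    using card_le_rank[OF assms(1), of I Y] assms(2) by auto
qed

lemma rank_indep:
  assumes fm: "finite_matroid M" and I: "indep M I"
  shows "rank M I = card I"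
proof -
  obtain J where J: "J \<subseteq> I" "indep M J" "card J = rank M I"
    using rank_attained[OF fm] .
  have "rank M I \<le> card I"
    using card_mono[OF indep_finite[OF fm I] J(1)] J(3) by simp
  moreover have "card I \<le> rank M I"
    using card_le_rank[OF fm I order_refl] .
  ultimately show ?thesis
    by simp
qed

lemma indep_if_rank_eq_card:
  assumes fm: "finite_matroid M" and "I \<subseteq> ground M" "rank M I = card I"
  shows "indep M I"
proof -
  obtain J where J: "J \<subseteq> I" "indep M J" "card J = rank M I"
    using rank_attained[OF fm] .
  have "finite I"
    using finite_subset[OF assms(2) finite_matroidD(1)[OF fm]] .
  then have "J = I"
    using card_subset_eq J assms(3) by simp
  then show ?thesis
    using J by simp
qed

lemma indep_extend_to_rank:
  assumes fm: "finite_matroid M"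
  shows "indep M I \<Longrightarrow> I \<subseteq> X \<Longrightarrow> \<exists>B. I \<subseteq> B \<and> B \<subseteq> X \<and> indep M B \<and> card B = rank M X"
proof (induction "rank M X - card I" arbitrary: I rule: less_induct)
  case less
  have le: "card I \<le> rank M X"
    using card_le_rank[OF fm less.prems] .
  show ?case
  proof (cases "card I = rank M X")
    case True
    then show ?thesis
      using less.prems by blast
  next
    case False
    obtain J where J: "J \<subseteq> X" "indep M J" "card J = rank M X"
      using rank_attained[OF fm] .
    have "card I < card J"
      using False le J(3) by simp
    then obtain y where y: "y \<in> J - I" "indep M (insert y I)"
      using finite_matroidD(5)[OF fm less.prems(1) J(2)] by blast
    have "card (insert y I) = Suc (card I)"
      using y(1) indep_finite[OF fm less.prems(1)] by simp
    then have "rank M X - card (insert y I) < rank M X - card I"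
      using False le by simp
    moreover have "insert y I \<subseteq> X"
      using y(1) J(1) less.prems(2) by blast
    ultimately have "\<exists>B. insert y I \<subseteq> B \<and> B \<subseteq> X \<and> indep M B \<and> card B = rank M X"
      by (rule less.hyps[OF _ y(2)])
    then show ?thesis
      by blast
  qed
qed

lemma rank_insert_eq_mono:
  assumes fm: "finite_matroid M" and AA': "A \<subseteq> A'"
    and spanned: "rank M (insert x A) = rank M A"
  shows "rank M (insert x A') = rank M A'"
proof (rule ccontr)
  assume ne: "rank M (insert x A') \<noteq> rank M A'"
  then have "x \<notin> A'"
    by (metis insert_absorb)
  obtain I where I: "I \<subseteq> A" "indep M I" "card I = rank M A"
    using rank_attained[OF fm] .
  obtain J where J: "I \<subseteq> J" "J \<subseteq> A'" "indep M J" "card J = rank M A'"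
    using indep_extend_to_rank[OF fm I(2) order_trans[OF I(1) AA']] by blast
  obtain K where K: "J \<subseteq> K" "K \<subseteq> insert x A'" "indep M K" "card K = rank M (insert x A')"
    using indep_extend_to_rank[OF fm J(3), of "insert x A'"] J(2) by blast
  have "rank M A' \<le> rank M (insert x A')"
    by (rule rank_mono[OF fm]) blast
  then have "card J < card K"
    using ne J(4) K(4) by simp
  have "x \<in> K"
  proof (rule ccontr)
    assume "x \<notin> K"
    then have "K \<subseteq> A'"
      using K(2) by blast
    then show False
      using card_le_rank[OF fm K(3) \<open>K \<subseteq> A'\<close>] \<open>card J < card K\<close> J(4) by simp
  qed
  then have "insert x I \<subseteq> K"
    using I(1) J(1) K(1) by blast
  then have "indep M (insert x I)"
    by (rule finite_matroidD(4)[OF fm K(3)])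
  then have "card (insert x I) \<le> rank M (insert x A)"
    using card_le_rank[OF fm] I(1) by blast
  moreover have "x \<notin> I"
    using \<open>x \<notin> A'\<close> I(1) AA' by blast
  ultimately show False
    using indep_finite[OF fm I(2)] spanned I(3) by simp
qed

subsection \<open>Circuits\<close>

lemma circuitD:
  assumes "circuit M C"
  shows "C \<subseteq> ground M" "\<not> indep M C" "D \<subset> C \<Longrightarrow> indep M D"
  using assms unfolding circuit_def by blast+

lemma circuit_finite: "finite_matroid M \<Longrightarrow> circuit M C \<Longrightarrow> finite C"
  using finite_subset[OF circuitD(1) finite_matroidD(1)] by blast

lemma circuit_eq_if_dependent_subset:
  assumes "circuit M C" "D \<subseteq> C" "\<not> indep M D"
  shows "D = C"
  using assms circuitD(3) by blast

lemma dependent_contains_circuit: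
  assumes fm: "finite_matroid M"
  shows "A \<subseteq> ground M \<Longrightarrow> \<not> indep M A \<Longrightarrow> \<exists>C\<subseteq>A. circuit M C"
proof (induction "card A" arbitrary: A rule: less_induct)
  case less
  show ?case
  proof (cases "circuit M A")
    case False
    then obtain D where D: "D \<subset> A" "\<not> indep M D"
      using less.prems unfolding circuit_def by blast
    have "card D < card A"
      using psubset_card_mono[OF finite_subset[OF less.prems(1) finite_matroidD(1)[OF fm]] D(1)] .
    moreover have "D \<subseteq> ground M"
      using D(1) less.prems(1) by blast
    ultimately obtain C where "C \<subseteq> D" "circuit M C"
      using less.hyps D(2) by blast
    then show ?thesis
      using D(1) by blast
  qed blast
qed

lemma circuit_rank_insert:
  assumes fm: "finite_matroid M" and C: "circuit M C" and e: "e \<in> C"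
  shows "rank M (insert e (C - {e})) = rank M (C - {e})"
proof -
  have fin: "finite C"
    using circuit_finite[OF fm C] .
  have "indep M (C - {e})"
    using circuitD(3)[OF C] e by blast
  then have "rank M (C - {e}) = card (C - {e})"
    by (rule rank_indep[OF fm])
  also have "\<dots> = card C - 1"
    using card_Diff_singleton[OF e] .
  finally have rank_minus: "rank M (C - {e}) = card C - 1" .
  obtain I where I: "I \<subseteq> C" "card I = rank M C"
    using rank_attained[OF fm] by blast
  have "rank M C \<le> card C"
    using card_mono[OF fin I(1)] I(2) by simp
  moreover have "rank M C \<noteq> card C"
    using indep_if_rank_eq_card[OF fm circuitD(1)[OF C]] circuitD(2)[OF C] by blast
  moreover have "rank M (C - {e}) \<le> rank M C"
    by (rule rank_mono[OF fm Diff_subset])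
  moreover have "insert e (C - {e}) = C"
    using e by blast
  ultimately show ?thesis
    using rank_minus by simp
qed

lemma circuit_through_if_rank_insert_eq:
  assumes fm: "finite_matroid M" and A: "A \<subseteq> ground M"
    and f: "f \<in> ground M" "f \<notin> A" and spanned: "rank M (insert f A) = rank M A"
  shows "\<exists>Z. circuit M Z \<and> f \<in> Z \<and> Z \<subseteq> insert f A"
proof -
  obtain I where I: "I \<subseteq> A" "indep M I" "card I = rank M A"
    using rank_attained[OF fm] .
  have "\<not> indep M (insert f I)"
  proof
    assume "indep M (insert f I)"
    then have "card (insert f I) \<le> rank M (insert f A)"
      using card_le_rank[OF fm] I(1) by blast
    moreover have "f \<notin> I"
      using f(2) I(1) by blast
    ultimately show False
      using indep_finite[OF fm I(2)] spanned I(3) by simp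
  qed
  moreover have "insert f I \<subseteq> ground M"
    using I(1) A f(1) by blast
  ultimately obtain Z where Z: "Z \<subseteq> insert f I" "circuit M Z"
    using dependent_contains_circuit[OF fm] by blast
  have "f \<in> Z"
  proof (rule ccontr)
    assume "f \<notin> Z"
    then have "indep M Z"
      using finite_matroidD(4)[OF fm I(2)] Z(1) by blast
    then show False
      using circuitD(2)[OF Z(2)] by blast
  qed
  then show ?thesis
    using Z I(1) by blast
qed

text \<open>Adding \<open>e\<close> or \<open>f\<close> to \<open>A = (C\<^sub>1 \<union> C\<^sub>2) - {e, f}\<close> does not raise the rank: for \<open>e\<close>
  because of \<open>C\<^sub>2\<close>, for \<open>f\<close> because of \<open>C\<^sub>1 \<subseteq> A \<union> {e, f}\<close>.\<close>

lemma strong_circuit_elimination: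
  assumes fm: "finite_matroid M" and C1: "circuit M C1" and C2: "circuit M C2"
    and e: "e \<in> C1" "e \<in> C2" and f: "f \<in> C1" "f \<notin> C2"
  shows "\<exists>Z. circuit M Z \<and> f \<in> Z \<and> Z \<subseteq> (C1 \<union> C2) - {e}"
proof -
  define A where "A = (C1 \<union> C2) - {e, f}"
  have "C2 - {e} \<subseteq> A"
    using f(2) unfolding A_def by blast
  then have e_spanned: "rank M (insert e A) = rank M A"
    using rank_insert_eq_mono[OF fm _ circuit_rank_insert[OF fm C2 e(2)]] by blast
  have "C1 - {f} \<subseteq> insert e A"
    unfolding A_def by blast
  then have "rank M (insert f (insert e A)) = rank M (insert e A)"
    using rank_insert_eq_mono[OF fm _ circuit_rank_insert[OF fm C1 f(1)]] by blast
  moreover have "rank M A \<le> rank M (insert f A)"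
    by (rule rank_mono[OF fm]) blast
  moreover have "rank M (insert f A) \<le> rank M (insert f (insert e A))"
    by (rule rank_mono[OF fm]) blast
  ultimately have "rank M (insert f A) = rank M A"
    using e_spanned by linarith
  moreover have "A \<subseteq> ground M" "f \<in> ground M" "f \<notin> A"
    using circuitD(1)[OF C1] circuitD(1)[OF C2] f(1) unfolding A_def by blast+
  ultimately obtain Z where "circuit M Z" "f \<in> Z" "Z \<subseteq> insert f A"
    using circuit_through_if_rank_insert_eq[OF fm] by blast
  moreover have "insert f A \<subseteq> (C1 \<union> C2) - {e}"
    using e f unfolding A_def by blast
  ultimately show ?thesis
    by blast
qed

lemma circuit_parallel_swap:
  assumes fm: "finite_matroid M" and P: "circuit M {a, b}" and C: "circuit M C"
    and a: "a \<in> C" and b: "b \<notin> C"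
  shows "circuit M (insert b (C - {a}))"
proof -
  obtain Z where Z: "circuit M Z" "b \<in> Z" "Z \<subseteq> ({a, b} \<union> C) - {a}"
    using strong_circuit_elimination[OF fm P C _ a _ b] by blast
  have "insert b (C - {a}) \<subseteq> Z"
  proof
    fix d assume d: "d \<in> insert b (C - {a})"
    show "d \<in> Z"
    proof (rule ccontr)
      assume "d \<notin> Z"
      have "a \<notin> Z"
        using Z(3) by blast
      then obtain Z' where Z': "circuit M Z'" "Z' \<subseteq> ({a, b} \<union> Z) - {b}"
        using strong_circuit_elimination[OF fm P Z(1) _ Z(2)] by blast
      have "d \<in> C" "d \<notin> Z'"
        using Z(2) Z'(2) d \<open>d \<notin> Z\<close> by auto
      then have "Z' \<subset> C"
        using Z'(2) Z(3) a by blast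
      then show False
        using circuitD(3)[OF C] circuitD(2)[OF Z'(1)] by blast
    qed
  qed
  moreover have "Z \<subseteq> insert b (C - {a})"
    using Z(3) by blast
  ultimately have "Z = insert b (C - {a})"
    by (rule subset_antisym[rotated])
  then show ?thesis
    using Z(1) by simp
qed

lemma longest_circuit_exists:
  assumes fm: "finite_matroid M" and "circuit M C"
  obtains D where "circuit M D" "\<And>D'. circuit M D' \<Longrightarrow> card D' \<le> card D"
proof -
  let ?lengths = "card ` {D. circuit M D}"
  have "{D. circuit M D} \<subseteq> Pow (ground M)"
    unfolding circuit_def by blast
  then have "finite {D. circuit M D}"
    by (rule finite_subset) (simp add: finite_matroidD(1)[OF fm])
  then have fin: "finite ?lengths"
    by (rule finite_imageI)
  moreover have "?lengths \<noteq> {}"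
    using assms(2) by blast
  ultimately have "Max ?lengths \<in> ?lengths"
    by (rule Max_in)
  then obtain D where D: "circuit M D" "card D = Max ?lengths"
    by auto
  show ?thesis
  proof (rule that[OF D(1)])
    fix D' assume "circuit M D'"
    then have "card D' \<in> ?lengths"
      by blast
    then show "card D' \<le> card D"
      using Max_ge[OF fin] D(2) by simp
  qed
qed

subsection \<open>Contraction of an independent set\<close>

lemma ground_contract: "ground (contract M F) = ground M - F"
  by (simp add: ground_def contract_def)

lemma indep_contract_iff:
  assumes fm: "finite_matroid M" and X: "indep M X"
  shows "indep (contract M X) Y \<longleftrightarrow> Y \<subseteq> ground M - X \<and> indep M (X \<union> Y)"
proof -
  have unfold: "indep (contract M X) Y \<longleftrightarrow>
      Y \<subseteq> ground M - X \<and> indep M Y \<and> rank M (X \<union> Y) = rank M X + rank M Y"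
    by (simp add: indep_def contract_def ground_def)
  have card_Un: "card (X \<union> Y) = card X + card Y" if "Y \<subseteq> ground M - X" "indep M Y"
    using card_Un_disjoint[OF indep_finite[OF fm X] indep_finite[OF fm that(2)]] that(1) by blast
  show ?thesis
  proof
    assume "indep (contract M X) Y"
    then have Y: "Y \<subseteq> ground M - X" "indep M Y" "rank M (X \<union> Y) = rank M X + rank M Y"
      using unfold by blast+
    then have "rank M (X \<union> Y) = card (X \<union> Y)"
      using card_Un rank_indep[OF fm X] rank_indep[OF fm Y(2)] by simp
    moreover have "X \<union> Y \<subseteq> ground M"
      using Y(1) finite_matroidD(2)[OF fm X] by blast
    ultimately show "Y \<subseteq> ground M - X \<and> indep M (X \<union> Y)"
      using indep_if_rank_eq_card[OF fm] Y(1) by blast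
  next
    assume XY: "Y \<subseteq> ground M - X \<and> indep M (X \<union> Y)"
    then have Y: "indep M Y"
      using finite_matroidD(4)[OF fm] by blast
    have "rank M (X \<union> Y) = rank M X + rank M Y"
      using card_Un[OF _ Y] XY rank_indep[OF fm] X Y by simp
    then show "indep (contract M X) Y"
      using unfold XY Y by blast
  qed
qed

lemma finite_matroid_contract:
  assumes fm: "finite_matroid M" and X: "indep M X"
  shows "finite_matroid (contract M X)"
  unfolding finite_matroid_def
proof (intro conjI allI impI)
  show "finite (ground (contract M X))"
    using finite_matroidD(1)[OF fm] by (simp add: ground_contract)
  show "indep (contract M X) {}"
    using indep_contract_iff[OF fm X] X by simp
next
  fix Y assume "indep (contract M X) Y"
  then show "Y \<subseteq> ground (contract M X)"
    using indep_contract_iff[OF fm X] unfolding ground_contract by blast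
next
  fix Y Z assume YZ: "indep (contract M X) Z \<and> Y \<subseteq> Z"
  then have "Z \<subseteq> ground M - X" "indep M (X \<union> Z)"
    using indep_contract_iff[OF fm X] by blast+
  moreover have "X \<union> Y \<subseteq> X \<union> Z"
    using YZ by blast
  ultimately have "Y \<subseteq> ground M - X" "indep M (X \<union> Y)"
    using YZ finite_matroidD(4)[OF fm] by blast+
  then show "indep (contract M X) Y"
    using indep_contract_iff[OF fm X] by blast
next
  fix I J assume IJ: "indep (contract M X) I \<and> indep (contract M X) J \<and> card I < card J"
  then have I: "I \<subseteq> ground M - X" "indep M (X \<union> I)"
    and J: "J \<subseteq> ground M - X" "indep M (X \<union> J)"
    using indep_contract_iff[OF fm X] by blast+
  have fin: "finite X" "finite I" "finite J"
    using indep_finite[OF fm X] indep_finite[OF fm I(2)] indep_finite[OF fm J(2)] by auto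
  have "card (X \<union> I) = card X + card I"
    using I fin by (subst card_Un_disjoint) auto
  moreover have "card (X \<union> J) = card X + card J"
    using J fin by (subst card_Un_disjoint) auto
  ultimately have "card (X \<union> I) < card (X \<union> J)"
    using IJ by simp
  then obtain y where y: "y \<in> (X \<union> J) - (X \<union> I)" "indep M (insert y (X \<union> I))"
    using finite_matroidD(5)[OF fm I(2) J(2)] by blast
  have "insert y I \<subseteq> ground M - X"
    using y I J by blast
  moreover have "X \<union> insert y I = insert y (X \<union> I)"
    by blast
  ultimately have "indep (contract M X) (insert y I)"
    using indep_contract_iff[OF fm X] y by simp
  then show "\<exists>y\<in>J - I. indep (contract M X) (insert y I)"
    using y by blast
qed

lemma not_indep_contract_Diff:
  assumes fm: "finite_matroid M" and X: "indep M X" and "\<not> indep M Z"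
  shows "\<not> indep (contract M X) (Z - X)"
proof
  assume "indep (contract M X) (Z - X)"
  then have "indep M (X \<union> (Z - X))"
    using indep_contract_iff[OF fm X] by blast
  then have "indep M Z"
    by (rule finite_matroidD(4)[OF fm]) blast
  then show False
    using assms(3) by blast
qed

lemma circuit_contract_lift:
  assumes fm: "finite_matroid M" and X: "indep M X" and C: "circuit (contract M X) C"
  obtains D where "circuit M D" "C \<subseteq> D" "D \<subseteq> C \<union> X"
proof -
  have C_ground: "C \<subseteq> ground M - X"
    using circuitD(1)[OF C] unfolding ground_contract .
  then have "\<not> indep M (X \<union> C)"
    using circuitD(2)[OF C] indep_contract_iff[OF fm X] by blast
  moreover have "X \<union> C \<subseteq> ground M"
    using C_ground finite_matroidD(2)[OF fm X] by blast
  ultimately obtain D where D: "D \<subseteq> X \<union> C" "circuit M D"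
    using dependent_contains_circuit[OF fm] by blast
  have "C \<subseteq> D"
  proof (rule ccontr)
    assume "\<not> C \<subseteq> D"
    then have "D - X \<subset> C"
      using D(1) by blast
    then show False
      using circuitD(3)[OF C] not_indep_contract_Diff[OF fm X circuitD(2)[OF D(2)]] by blast
  qed
  then show ?thesis
    using that D by blast
qed

lemma circuit_pair_contract:
  assumes fm: "finite_matroid M" and C: "circuit M C" and ab: "a \<in> C" "b \<in> C" "a \<noteq> b"
  shows "circuit (contract M (C - {a, b})) {a, b}"
proof -
  let ?X = "C - {a, b}"
  have "?X \<subset> C"
    using ab(1) by blast
  then have X: "indep M ?X"
    by (rule circuitD(3)[OF C])
  have ab_ground: "{a, b} \<subseteq> ground M - ?X"
    using circuitD(1)[OF C] ab(1,2) by blast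
  have "?X \<union> {a, b} = C"
    using ab(1,2) by blast
  then have "\<not> indep M (?X \<union> {a, b})"
    using circuitD(2)[OF C] by (simp only: not_False_eq_True)
  then have dependent: "\<not> indep (contract M ?X) {a, b}"
    using indep_contract_iff[OF fm X] by blast
  have minimal: "indep (contract M ?X) D" if D: "D \<subset> {a, b}" for D
  proof -
    have "a \<notin> D \<or> b \<notin> D"
      using D by blast
    then have "?X \<union> D \<noteq> C"
      using ab(1,2) by blast
    moreover have "?X \<union> D \<subseteq> C"
      using D ab(1,2) by blast
    ultimately have "indep M (?X \<union> D)"
      using circuitD(3)[OF C] by blast
    moreover have "D \<subseteq> ground M - ?X"
      using D ab_ground by blast
    ultimately show ?thesis
      using indep_contract_iff[OF fm X] by blast
  qed
  show ?thesis
    unfolding circuit_def ground_contract using ab_ground dependent minimal by blast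
qed

subsection \<open>Growing a circuit through \<open>e\<^sub>0\<close>\<close>

text \<open>Lift \<open>D'\<close> to a circuit \<open>D\<^sub>1\<close> of \<open>M\<close>. If \<open>D\<^sub>1\<close> misses \<open>e\<^sub>0\<close>, eliminating \<open>e\<^sub>1\<close> between
  \<open>C\<^sub>0\<close> and \<open>D\<^sub>1\<close> gives a circuit \<open>Z \<ni> e\<^sub>0\<close> whose trace outside \<open>X\<close> is dependent in \<open>M/X\<close>
  and contained in the circuit obtained from \<open>D'\<close> by swapping \<open>e\<^sub>1\<close> for its parallel \<open>e\<^sub>1'\<close>,
  hence equal to it.\<close>

lemma circuit_through_grows:
  assumes fm: "finite_matroid M" and C0: "circuit M C0"
    and in_C0: "e0 \<in> C0" "e1 \<in> C0" "e1' \<in> C0"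
    and distinct: "e0 \<noteq> e1" "e0 \<noteq> e1'" "e1 \<noteq> e1'"
    and D': "circuit (contract M (C0 - {e1, e1'})) D'" and e1_D': "e1 \<in> D'"
  shows "\<exists>Z. circuit M Z \<and> e0 \<in> Z \<and> card D' + 1 \<le> card Z"
proof -
  define X where "X = C0 - {e1, e1'}"
  define N where "N = contract M X"
  have "X \<subset> C0"
    using in_C0(2) unfolding X_def by blast
  then have X: "indep M X"
    by (rule circuitD(3)[OF C0])
  have fmN: "finite_matroid N"
    unfolding N_def by (rule finite_matroid_contract[OF fm X])
  have D'_N: "circuit N D'"
    using D' unfolding N_def X_def .
  have fin_D': "finite D'"
    by (rule circuit_finite[OF fmN D'_N])
  have "D' \<subseteq> ground M - X"
    using circuitD(1)[OF D'_N] unfolding N_def ground_contract .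
  moreover have e0_X: "e0 \<in> X"
    using in_C0(1) distinct(1,2) unfolding X_def by blast
  ultimately have e0_D': "e0 \<notin> D'"
    by blast
  obtain D1 where D1: "circuit M D1" "D' \<subseteq> D1" "D1 \<subseteq> D' \<union> X"
    using circuit_contract_lift[OF fm X] D'_N unfolding N_def by blast
  show ?thesis
  proof (cases "e0 \<in> D1")
    case True
    then have "insert e0 D' \<subseteq> D1"
      using D1(2) by blast
    then have "card (insert e0 D') \<le> card D1"
      by (rule card_mono[OF circuit_finite[OF fm D1(1)]])
    then show ?thesis
      using D1(1) True e0_D' fin_D' by auto
  next
    case False
    obtain Z where Z: "circuit M Z" "e0 \<in> Z" "Z \<subseteq> (C0 \<union> D1) - {e1}"
      using strong_circuit_elimination[OF fm C0 D1(1) in_C0(2) _ in_C0(1) False] e1_D' D1(2)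
      by blast
    have Z_dep: "\<not> indep N (Z - X)"
      unfolding N_def by (rule not_indep_contract_Diff[OF fm X circuitD(2)[OF Z(1)]])
    have Z_sub: "Z - X \<subseteq> insert e1' (D' - {e1})"
      using Z(3) D1(3) unfolding X_def by blast
    have "e1' \<notin> D'"
    proof
      assume "e1' \<in> D'"
      then have "Z - X \<subset> D'"
        using Z_sub e1_D' distinct(3) by blast
      then show False
        using circuitD(3)[OF D'_N] Z_dep by blast
    qed
    have "circuit N {e1, e1'}"
      unfolding N_def X_def by (rule circuit_pair_contract[OF fm C0 in_C0(2,3) distinct(3)])
    then have "circuit N (insert e1' (D' - {e1}))"
      by (rule circuit_parallel_swap[OF fmN _ D'_N e1_D' \<open>e1' \<notin> D'\<close>])
    then have "Z - X = insert e1' (D' - {e1})"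
      using circuit_eq_if_dependent_subset Z_sub Z_dep by blast
    then have "insert e0 (insert e1' (D' - {e1})) \<subseteq> Z"
      using Z(2) by blast
    then have "card (insert e0 (insert e1' (D' - {e1}))) \<le> card Z"
      by (rule card_mono[OF circuit_finite[OF fm Z(1)]])
    moreover have "card (insert e0 (insert e1' (D' - {e1}))) = card D' + 1"
      using card.remove[OF fin_D' e1_D'] fin_D' \<open>e1' \<notin> D'\<close> e0_D' distinct(2) by simp
    ultimately show ?thesis
      using Z(1,2) by auto
  qed
qed

subsection \<open>Chains of circuits\<close>

text \<open>The hypotheses of the theorem except \<open>C i \<subseteq> ground M\<close> and the disjointness of
  non-consecutive \<open>C i\<close>, which the argument never uses.\<close>

definition circuit_chain ::
    "'a matroid \<Rightarrow> (nat \<Rightarrow> 'a set) \<Rightarrow> (nat \<Rightarrow> 'a) \<Rightarrow> (nat \<Rightarrow> 'a) \<Rightarrow> nat \<Rightarrow> bool" where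
  "circuit_chain M C e e' k \<longleftrightarrow>
     inj_on e {1..k}
   \<and> (\<forall>i\<le>k. card (C i) \<ge> 3)
   \<and> (\<forall>i\<in>{1..k}. C (i - 1) \<inter> C i = {e i})
   \<and> e 0 \<in> C 0 \<and> (k \<ge> 1 \<longrightarrow> e 0 \<noteq> e 1)
   \<and> (\<forall>i\<in>{1..k}. e' i \<in> C (i - 1) - {e (i - 1), e i})
   \<and> (\<forall>i\<le>k. circuit (contr_seq M C e e' i) (C i))"

lemma contr_seq_Suc_shift:
  "contr_seq M C e e' (Suc i) =
   contr_seq (contract M (C 0 - {e 1, e' 1})) (\<lambda>i. C (Suc i)) (\<lambda>i. e (Suc i)) (\<lambda>i. e' (Suc i)) i"
  by (induction i) simp_all

lemma circuit_chain_first_link: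
  assumes "circuit_chain M C e e' (Suc k)"
  shows "circuit M (C 0)" "e 0 \<in> C 0" "e 1 \<in> C 0" "e' 1 \<in> C 0"
    and "e 0 \<noteq> e 1" "e 0 \<noteq> e' 1" "e 1 \<noteq> e' 1" "e 1 \<in> C 1"
proof -
  have "circuit (contr_seq M C e e' 0) (C 0)"
    and links: "\<forall>i\<in>{1..Suc k}. C (i - 1) \<inter> C i = {e i}"
    and pivots: "\<forall>i\<in>{1..Suc k}. e' i \<in> C (i - 1) - {e (i - 1), e i}"
    and "e 0 \<in> C 0" "e 0 \<noteq> e 1"
    using assms unfolding circuit_chain_def by auto
  then show "circuit M (C 0)" "e 0 \<in> C 0" "e 0 \<noteq> e 1"
    by simp_all
  have "C 0 \<inter> C 1 = {e 1}"
    using links[rule_format, of 1] by simp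
  then show "e 1 \<in> C 0" "e 1 \<in> C 1"
    by blast+
  have "e' 1 \<in> C 0 - {e 0, e 1}"
    using pivots[rule_format, of 1] by simp
  then show "e' 1 \<in> C 0" "e 0 \<noteq> e' 1" "e 1 \<noteq> e' 1"
    by auto
qed

lemma circuit_chain_shift:
  assumes chain: "circuit_chain M C e e' (Suc k)"
  shows "circuit_chain (contract M (C 0 - {e 1, e' 1}))
           (\<lambda>i. C (Suc i)) (\<lambda>i. e (Suc i)) (\<lambda>i. e' (Suc i)) k"
proof -
  have inj: "inj_on e {1..Suc k}"
    and links: "\<forall>i\<in>{1..Suc k}. C (i - 1) \<inter> C i = {e i}"
    and pivots: "\<forall>i\<in>{1..Suc k}. e' i \<in> C (i - 1) - {e (i - 1), e i}"
    and circuits: "\<forall>i\<le>Suc k. circuit (contr_seq M C e e' i) (C i)"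
    and "\<forall>i\<le>Suc k. card (C i) \<ge> 3"
    using chain unfolding circuit_chain_def by blast+
  then have "\<forall>i\<le>k. card (C (Suc i)) \<ge> 3"
    by simp
  moreover have "inj_on (\<lambda>i. e (Suc i)) {1..k}"
    using inj unfolding inj_on_def by fastforce
  moreover have "\<forall>i\<in>{1..k}. C (Suc (i - 1)) \<inter> C (Suc i) = {e (Suc i)}"
  proof
    fix i assume "i \<in> {1..k}"
    then have "Suc i \<in> {1..Suc k}" and i: "Suc (i - 1) = i"
      by auto
    then show "C (Suc (i - 1)) \<inter> C (Suc i) = {e (Suc i)}"
      using links[rule_format, of "Suc i"] unfolding i by simp
  qed
  moreover have "\<forall>i\<in>{1..k}. e' (Suc i) \<in> C (Suc (i - 1)) - {e (Suc (i - 1)), e (Suc i)}"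
  proof
    fix i assume "i \<in> {1..k}"
    then have "Suc i \<in> {1..Suc k}" and i: "Suc (i - 1) = i"
      by auto
    then show "e' (Suc i) \<in> C (Suc (i - 1)) - {e (Suc (i - 1)), e (Suc i)}"
      using pivots[rule_format, of "Suc i"] unfolding i by simp
  qed
  moreover have "k \<ge> 1 \<longrightarrow> e (Suc 0) \<noteq> e (Suc 1)"
    using inj unfolding inj_on_def by fastforce
  moreover have "\<forall>i\<le>k. circuit (contr_seq (contract M (C 0 - {e 1, e' 1}))
      (\<lambda>i. C (Suc i)) (\<lambda>i. e (Suc i)) (\<lambda>i. e' (Suc i)) i) (C (Suc i))"
  proof (intro allI impI)
    fix i assume "i \<le> k"
    then have "circuit (contr_seq M C e e' (Suc i)) (C (Suc i))"
      using circuits[rule_format, of "Suc i"] by (simp del: contr_seq.simps)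
    then show "circuit (contr_seq (contract M (C 0 - {e 1, e' 1}))
        (\<lambda>i. C (Suc i)) (\<lambda>i. e (Suc i)) (\<lambda>i. e' (Suc i)) i) (C (Suc i))"
      by (simp only: contr_seq_Suc_shift)
  qed
  ultimately show ?thesis
    using circuit_chain_first_link(8)[OF chain] unfolding circuit_chain_def by simp
qed

lemma circuit_chain_long_circuit_through:
  assumes "finite_matroid M" "circuit_chain M C e e' k"
  shows "\<exists>D. circuit M D \<and> e 0 \<in> D \<and> k + 2 \<le> card D"
  using assms
proof (induction k arbitrary: M C e e')
  case 0
  then have "circuit M (C 0)" "e 0 \<in> C 0" "3 \<le> card (C 0)"
    unfolding circuit_chain_def by auto
  then show ?case
    by fastforce
next
  case (Suc k)
  note link = circuit_chain_first_link[OF Suc.prems(2)]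
  define M1 where "M1 = contract M (C 0 - {e 1, e' 1})"
  have "C 0 - {e 1, e' 1} \<subset> C 0"
    using link(3) by blast
  then have "finite_matroid M1"
    unfolding M1_def by (intro finite_matroid_contract[OF Suc.prems(1)] circuitD(3)[OF link(1)])
  then obtain D' where D': "circuit M1 D'" "e 1 \<in> D'" "k + 2 \<le> card D'"
    using Suc.IH circuit_chain_shift[OF Suc.prems(2)] unfolding M1_def by fastforce
  then obtain Z where "circuit M Z" "e 0 \<in> Z" "card D' + 1 \<le> card Z"
    using circuit_through_grows[OF Suc.prems(1) link(1,2,3,4,5,6,7)] unfolding M1_def by blast
  then show ?case
    using D'(3) by auto
qed

lemma circuit_chain_circuit_card_ge:
  assumes "finite_matroid M" "circuit_chain M C e e' k" "i \<le> k"
  shows "\<exists>D. circuit M D \<and> card (C i) \<le> card D"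
  using assms
proof (induction k arbitrary: M C e e' i)
  case 0
  then have "circuit M (C i)"
    unfolding circuit_chain_def by auto
  then show ?case
    by blast
next
  case (Suc k)
  note link = circuit_chain_first_link[OF Suc.prems(2)]
  show ?case
  proof (cases i)
    case 0
    then show ?thesis
      using link(1) by blast
  next
    case (Suc j)
    define X where "X = C 0 - {e 1, e' 1}"
    have "X \<subset> C 0"
      using link(3) unfolding X_def by blast
    then have X: "indep M X"
      by (rule circuitD(3)[OF link(1)])
    then obtain D' where D': "circuit (contract M X) D'" "card (C i) \<le> card D'"
      using Suc.IH[OF finite_matroid_contract[OF Suc.prems(1) X]] circuit_chain_shift[OF Suc.prems(2)]
        Suc.prems(3) \<open>i = Suc j\<close> unfolding X_def by fastforce
    obtain D where "circuit M D" "D' \<subseteq> D"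
      using circuit_contract_lift[OF Suc.prems(1) X D'(1)] by blast
    then show ?thesis
      using card_mono[OF circuit_finite[OF Suc.prems(1)]] D'(2) by (meson le_trans)
  qed
qed

lemma sqrt_sum_le_if_bounded:
  fixes a :: "nat \<Rightarrow> real"
  assumes "\<And>i. i \<le> k \<Longrightarrow> a i \<le> d" "real k + 1 \<le> d"
  shows "sqrt (\<Sum>i\<le>k. a i) \<le> d"
proof (rule real_le_lsqrt)
  show "0 \<le> d"
    using assms(2) by linarith
  have "(\<Sum>i\<le>k. a i) \<le> (\<Sum>i\<le>k. d)"
    by (rule sum_mono) (simp add: assms(1))
  also have "\<dots> = (real k + 1) * d"
    by simp
  also have "\<dots> \<le> d * d"
    using assms(2) \<open>0 \<le> d\<close> by (rule mult_right_mono)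
  finally show "(\<Sum>i\<le>k. a i) \<le> d\<^sup>2"
    by (simp add: power2_eq_square)
qed

theorem corollary3p13:
  fixes M :: "'a matroid" and k :: nat and e e' :: "nat \<Rightarrow> 'a"
    and C :: "nat \<Rightarrow> 'a set"
  assumes "finite_matroid M"
    and "inj_on e {1..k}"
    and "\<forall>i\<le>k. C i \<subseteq> ground M"
    and "\<forall>i\<le>k. card (C i) \<ge> 3"
    and "\<forall>i\<in>{1..k}. C (i - 1) \<inter> C i = {e i}"
    and "\<forall>i\<le>k. \<forall>j\<le>k. i + 2 \<le> j \<longrightarrow> C i \<inter> C j = {}"
    and "e 0 \<in> C 0" and "k \<ge> 1 \<longrightarrow> e 0 \<noteq> e 1"
    and "\<forall>i\<in>{1..k}. e' i \<in> C (i - 1) - {e (i - 1), e i}"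
    and "\<forall>i\<le>k. circuit (contr_seq M C e e' i) (C i)"
  shows "\<exists>D. circuit M D \<and> real (card D) \<ge> sqrt (\<Sum>i\<le>k. real (card (C i)))"
proof -
  have chain: "circuit_chain M C e e' k"
    unfolding circuit_chain_def using assms(2,4,5,7-10) by blast
  obtain D0 where D0: "circuit M D0" "k + 2 \<le> card D0"
    using circuit_chain_long_circuit_through[OF assms(1) chain] by blast
  obtain D where D: "circuit M D" and longest: "\<And>D'. circuit M D' \<Longrightarrow> card D' \<le> card D"
    using longest_circuit_exists[OF assms(1) D0(1)] by blast
  have "real k + 1 \<le> real (card D)"
    using longest[OF D0(1)] D0(2) by simp
  moreover have "real (card (C i)) \<le> real (card D)" if "i \<le> k" for i
    using circuit_chain_circuit_card_ge[OF assms(1) chain that] longest by fastforce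
  ultimately have "sqrt (\<Sum>i\<le>k. real (card (C i))) \<le> real (card D)"
    by (intro sqrt_sum_le_if_bounded)
  then show ?thesis
    using D by blast
qed

end
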